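(* Let $f:[0,1]\to\mathbb{R}$ with $f(0),f(1)\in\mathbb{Z}$, let $n\in\mathbb{N}_+$, $n\ge 2$, and let $\Phi_n:[0,1]\to\mathbb{R}$ satisfy \[ \Phi_n\left(\tfrac{2}{n}\right)-2\Phi_n\left(\tfrac{1}{n}\right)+\Phi_n(0)\ge\binom{n}{2}^{-1}, \] \[ \Phi_n\left(\tfrac{k+2}{n}\right)-2\Phi_n\left(\tfrac{k+1}{n}\right)+\Phi_n\left(\tfrac{k}{n}\right)\ge\binom{n}{k}^{-1}+\binom{n}{k+2}^{-1},\quad k=1,\dots,n-3 \ (\text{when } n\ge 4), \] \[ \Phi_n(1)-2\Phi_n\left(\tfrac{n-1}{n}\right)+\Phi_n\left(\tfrac{n-2}{n}\right)\ge\binom{n}{n-2}^{-1}. \] If $f(x)-\Phi_n(x)$ is convex on $[0,1]$, then $\widetilde{B}_n(f)$ is convex on $[0,1]$.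
   Context: For $n\in\mathbb{N}_+$ and $f:[0,1]\to\mathbb{R}$, $\widetilde{B}_n(f)(x):=\sum_{k=0}^n \left[f\left(\frac{k}{n}\right)\binom{n}{k}\right]x^k(1-x)^{n-k}$, where $[\alpha]$ is the largest integer $\le\alpha$. *)

theory Defs
  imports "HOL-Analysis.Analysis"
begin

definition Btilde :: "nat \<Rightarrow> (real \<Rightarrow> real) \<Rightarrow> real \<Rightarrow> real" where
  "Btilde n f x = (\<Sum>k=0..n. of_int \<lfloor>f (real k / real n) * real (n choose k)\<rfloor>
                       * x ^ k * (1 - x) ^ (n - k))"

end

theory Submission
  imports Defs
begin

text \<open>\<open>Btilde n f\<close> is the Bernstein polynomial whose k-th coefficient is f(k/n) rounded
  down to a multiple of 1/C(n,k). The rounding error lies in [0, 1/C(n,k)] and vanishes at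
  k = 0 and k = n, where f is integer-valued. So the second differences of the coefficients are
  at least those of f - \<Phi> (nonnegative by convexity) plus those of \<Phi> minus the two outer
  rounding errors, which the hypotheses make nonnegative. A Bernstein polynomial whose
  coefficients have nonnegative second differences is convex: its second derivative is n(n-1)
  times the Bernstein polynomial of degree n-2 with these second differences as coefficients.\<close>

lemma Bernstein_has_real_derivative:
  assumes "k \<le> n"
  shows "(Bernstein n k has_real_derivative
     real n * ((if k = 0 then 0 else Bernstein (n-1) (k-1) x) - Bernstein (n-1) k x)) (at x)"
proof -
  have D: "(Bernstein n k has_real_derivative
     real (n choose k) * (real k * x^(k-1)) * (1-x)^(n-k)
       + real (n choose k) * x^k * (real (n-k) * (1-x)^(n-k-1) * (-1))) (at x)"
    unfolding Bernstein_def[abs_def] by (auto intro!: derivative_eq_intros)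
  have c2: "real (n-k) * real (n choose k) = real n * real ((n-1) choose k)"
    using binomial_absorb_comp[of n k] by (metis of_nat_mult)
  have e2: "n - k - 1 = n - 1 - k" by simp
  show ?thesis
  proof (cases k)
    case 0
    then show ?thesis using D c2 assms by (simp add: Bernstein_def algebra_simps)
  next
    case (Suc j)
    have c1: "real (Suc j) * real (n choose Suc j) = real n * real ((n-1) choose j)"
      using binomial_absorption[of j n] by (metis of_nat_mult)
    have e1: "n - Suc j = n - 1 - j" by simp
    have "real (n choose k) * (real k * x^(k-1)) * (1-x)^(n-k)
            + real (n choose k) * x^k * (real (n-k) * (1-x)^(n-k-1) * (-1))
        = (real k * real (n choose k)) * x^(k-1) * (1-x)^(n-k)
            - (real (n-k) * real (n choose k)) * x^k * (1-x)^(n-k-1)"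
      by (simp add: algebra_simps)
    also have "\<dots> = real n * (Bernstein (n-1) (k-1) x - Bernstein (n-1) k x)"
      unfolding c2 e2 using c1 e1 Suc by (simp add: Bernstein_def algebra_simps)
    finally show ?thesis using D Suc by simp
  qed
qed

definition Bernstein_poly :: "nat \<Rightarrow> (nat \<Rightarrow> real) \<Rightarrow> real \<Rightarrow> real" where
  "Bernstein_poly n c x = (\<Sum>k\<le>n. c k * Bernstein n k x)"

lemma Bernstein_poly_has_real_derivative:
  "(Bernstein_poly n c has_real_derivative
     real n * Bernstein_poly (n-1) (\<lambda>k. c (Suc k) - c k) x) (at x)"
proof (cases n)
  case 0
  then show ?thesis unfolding Bernstein_poly_def[abs_def] Bernstein_def by simp
next
  case (Suc p)
  let ?B' = "\<lambda>k. (if k = 0 then 0 else Bernstein (n-1) (k-1) x) - Bernstein (n-1) k x"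
  have "(Bernstein_poly n c has_real_derivative (\<Sum>k\<le>n. c k * (real n * ?B' k))) (at x)"
    unfolding Bernstein_poly_def[abs_def]
    by (intro DERIV_sum DERIV_cmult Bernstein_has_real_derivative) simp
  also have "(\<Sum>k\<le>n. c k * (real n * ?B' k))
      = real n * ((\<Sum>k\<le>n. c k * (if k = 0 then 0 else Bernstein (n-1) (k-1) x))
                  - (\<Sum>k\<le>n. c k * Bernstein (n-1) k x))"
    by (simp add: sum_distrib_left algebra_simps sum_subtractf)
  also have "(\<Sum>k\<le>n. c k * (if k = 0 then 0 else Bernstein (n-1) (k-1) x))
      = (\<Sum>k\<le>p. c (Suc k) * Bernstein p k x)"
    unfolding Suc by (subst sum.atMost_Suc_shift) simp
  also have "(\<Sum>k\<le>n. c k * Bernstein (n-1) k x) = (\<Sum>k\<le>p. c k * Bernstein p k x)"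
    unfolding Suc by (simp add: Bernstein_def)
  also have "real n * ((\<Sum>k\<le>p. c (Suc k) * Bernstein p k x) - (\<Sum>k\<le>p. c k * Bernstein p k x))
      = real n * Bernstein_poly (n-1) (\<lambda>k. c (Suc k) - c k) x"
    by (simp add: Bernstein_poly_def Suc left_diff_distrib sum_subtractf)
  finally show ?thesis .
qed

lemma Bernstein_poly_nonneg:
  assumes "\<And>k. k \<le> n \<Longrightarrow> c k \<ge> 0" and "x \<in> {0..1}"
  shows "Bernstein_poly n c x \<ge> 0"
  unfolding Bernstein_poly_def using assms
  by (intro sum_nonneg mult_nonneg_nonneg) (auto intro: Bernstein_nonneg)

lemma convex_on_Bernstein_poly:
  assumes "\<And>k. k + 2 \<le> n \<Longrightarrow> c (k + 2) - 2 * c (k + 1) + c k \<ge> 0"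
  shows "convex_on {0..1} (Bernstein_poly n c)"
proof (rule f''_ge0_imp_convex)
  let ?c' = "\<lambda>k. c (Suc k) - c k"
  let ?c'' = "\<lambda>k. ?c' (Suc k) - ?c' k"
  fix x :: real
  show "(Bernstein_poly n c has_real_derivative real n * Bernstein_poly (n-1) ?c' x) (at x)"
    by (rule Bernstein_poly_has_real_derivative)
  show "((\<lambda>x. real n * Bernstein_poly (n-1) ?c' x) has_real_derivative
      real n * (real (n-1) * Bernstein_poly (n-1-1) ?c'' x)) (at x)"
    by (intro DERIV_cmult Bernstein_poly_has_real_derivative)
  assume x: "x \<in> {0..1}"
  show "real n * (real (n-1) * Bernstein_poly (n-1-1) ?c'' x) \<ge> 0"
  proof (cases "n \<ge> 2")
    case True
    then have "Bernstein_poly (n-1-1) ?c'' x \<ge> 0"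
      using assms x by (intro Bernstein_poly_nonneg) (auto simp: algebra_simps)
    then show ?thesis by simp
  qed auto
qed simp

lemma convex_on_second_difference_nonneg:
  fixes x h :: real
  assumes "convex_on S g" "x \<in> S" "x + 2 * h \<in> S"
  shows "g (x + 2 * h) - 2 * g (x + h) + g x \<ge> 0"
proof -
  have "(1 - 1/2) *\<^sub>R x + (1/2) *\<^sub>R (x + 2 * h) = x + h" by (simp add: field_simps)
  then have "g (x + h) \<le> (1 - 1/2) * g x + 1/2 * g (x + 2 * h)"
    using convex_onD[OF assms(1), of "1/2" x "x + 2 * h"] assms(2,3) by simp
  then show ?thesis by simp
qed

lemma floor_mult_divide_bounds:
  fixes t c :: real
  assumes "c > 0"
  shows "0 \<le> t - \<lfloor>t * c\<rfloor> / c" and "t - \<lfloor>t * c\<rfloor> / c \<le> 1 / c"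
proof -
  have "t - \<lfloor>t * c\<rfloor> / c = (t * c - \<lfloor>t * c\<rfloor>) / c" using assms by (simp add: field_simps)
  moreover have "0 \<le> t * c - \<lfloor>t * c\<rfloor>" "t * c - \<lfloor>t * c\<rfloor> \<le> 1" by linarith+
  ultimately show "0 \<le> t - \<lfloor>t * c\<rfloor> / c" "t - \<lfloor>t * c\<rfloor> / c \<le> 1 / c"
    using assms by (simp_all add: divide_right_mono)
qed

definition Btilde_coeff :: "nat \<Rightarrow> (real \<Rightarrow> real) \<Rightarrow> nat \<Rightarrow> real" where
  "Btilde_coeff n f k = \<lfloor>f (real k / real n) * real (n choose k)\<rfloor> / real (n choose k)"

lemma Btilde_eq_Bernstein_poly: "Btilde n f = Bernstein_poly n (Btilde_coeff n f)"
  unfolding Btilde_def Bernstein_poly_def Btilde_coeff_def Bernstein_def atMost_atLeast0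
  by (intro ext sum.cong) auto

lemma Btilde_coeff_bounds:
  assumes "k \<le> n"
  shows "0 \<le> f (real k / real n) - Btilde_coeff n f k"
    and "f (real k / real n) - Btilde_coeff n f k \<le> 1 / real (n choose k)"
  using floor_mult_divide_bounds assms unfolding Btilde_coeff_def by simp_all

lemma Btilde_coeff_0: "f 0 \<in> \<int> \<Longrightarrow> Btilde_coeff n f 0 = f 0"
  by (auto simp: Btilde_coeff_def elim: Ints_cases)

lemma Btilde_coeff_n: "f 1 \<in> \<int> \<Longrightarrow> n > 0 \<Longrightarrow> Btilde_coeff n f n = f 1"
  by (auto simp: Btilde_coeff_def elim: Ints_cases)

lemma Btilde_coeff_second_difference_nonneg:
  fixes f \<Phi> :: "real \<Rightarrow> real"
  assumes "f 0 \<in> \<int>" "f 1 \<in> \<int>" "convex_on {0..1} (\<lambda>x. f x - \<Phi> x)" "k + 2 \<le> n"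
    and "\<Phi> (real (k + 2) / real n) - 2 * \<Phi> (real (k + 1) / real n) + \<Phi> (real k / real n)
      \<ge> (if k = 0 then 0 else 1 / real (n choose k))
          + (if k + 2 = n then 0 else 1 / real (n choose (k + 2)))"
  shows "Btilde_coeff n f (k + 2) - 2 * Btilde_coeff n f (k + 1) + Btilde_coeff n f k \<ge> 0"
proof -
  define e where "e j = f (real j / real n) - Btilde_coeff n f j" for j
  have "e k \<le> (if k = 0 then 0 else 1 / real (n choose k))"
    using Btilde_coeff_bounds(2)[of k n f] Btilde_coeff_0[of f n, OF assms(1)] assms(4)
    by (auto simp: e_def)
  moreover have "e (k + 2) \<le> (if k + 2 = n then 0 else 1 / real (n choose (k + 2)))"
    using Btilde_coeff_bounds(2)[of "k + 2" n f] Btilde_coeff_n[of f n, OF assms(2)] assms(4)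
    by (auto simp: e_def)
  moreover have "e (k + 1) \<ge> 0"
    using Btilde_coeff_bounds(1)[of "k + 1" n f] assms(4) by (simp add: e_def)
  moreover have "(f - \<Phi>) (real (k + 2) / real n) - 2 * (f - \<Phi>) (real (k + 1) / real n)
      + (f - \<Phi>) (real k / real n) \<ge> 0"
  proof -
    have "real (k + 1) / real n = real k / real n + 1 / real n"
      and "real (k + 2) / real n = real k / real n + 2 * (1 / real n)"
      by (simp_all add: add_divide_distrib)
    moreover have "real k / real n \<in> {0..1}" "real (k + 2) / real n \<in> {0..1}"
      using assms(4) by (auto simp: divide_le_eq_1)
    ultimately show ?thesis
      using convex_on_second_difference_nonneg[OF assms(3), of "real k / real n" "1 / real n"]
      by (simp add: fun_diff_def)
  qed
  ultimately show ?thesis using assms(5) by (simp add: e_def fun_diff_def)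
qed

theorem proposition3p1:
  fixes f \<Phi> :: "real \<Rightarrow> real" and n :: nat
  assumes f0: "f 0 \<in> \<int>" and f1: "f 1 \<in> \<int>"
    and n2: "n \<ge> 2"
    and first: "\<Phi> (2 / real n) - 2 * \<Phi> (1 / real n) + \<Phi> 0 \<ge> 1 / real (n choose 2)"
    and middle: "\<And>k. 1 \<le> k \<Longrightarrow> k + 3 \<le> n \<Longrightarrow>
        \<Phi> (real (k + 2) / real n) - 2 * \<Phi> (real (k + 1) / real n) + \<Phi> (real k / real n)
          \<ge> 1 / real (n choose k) + 1 / real (n choose (k + 2))"
    and last: "\<Phi> 1 - 2 * \<Phi> (real (n - 1) / real n) + \<Phi> (real (n - 2) / real n)
          \<ge> 1 / real (n choose (n - 2))"
    and conv: "convex_on {0..1} (\<lambda>x. f x - \<Phi> x)"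
  shows "convex_on {0..1} (Btilde n f)"
  unfolding Btilde_eq_Bernstein_poly
proof (rule convex_on_Bernstein_poly, rule Btilde_coeff_second_difference_nonneg[OF f0 f1 conv])
  fix k assume k: "k + 2 \<le> n"
  then show "k + 2 \<le> n" .
  consider "k = 0" | "k \<noteq> 0" "k + 2 = n" | "k \<ge> 1" "k + 3 \<le> n" using k by linarith
  then show "\<Phi> (real (k + 2) / real n) - 2 * \<Phi> (real (k + 1) / real n) + \<Phi> (real k / real n)
      \<ge> (if k = 0 then 0 else 1 / real (n choose k))
          + (if k + 2 = n then 0 else 1 / real (n choose (k + 2)))"
  proof cases
    case 1
    then show ?thesis using first k by (auto simp: numeral_2_eq_2 intro: order_trans[rotated])
  next
    case 2
    then have "real (k + 1) = real (n - 1)" "k = n - 2" "real n \<noteq> 0" by auto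
    then show ?thesis using last 2 by simp
  qed (use middle in simp)
qed

end
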